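(* There is a universal constant $A>0$ such that the following holds. Let $N\ge6$ be even and consider the balanced Bernoulli–Laplace chain with $N_1=N_2=N_w=N_b=N/2$. For every $c>0$ and every integer $$m\ \ge\ \tfrac14 N\log N+\Big(\tfrac c2-\tfrac{\log 2}{8}\Big)N,$$ we have $$E_\pi\big[\|\rho_m(j;\cdot)-\pi\|_V\big]:=\sum_{j=0}^{N/2}\pi_j\,\|\rho_m(j;\cdot)-\pi\|_V\ \le\ A\,e^{-2c}.$$
   Context: Balanced Bernoulli–Laplace model: $N$ even, two urns each containing $N/2$ balls, $N/2$ white and $N/2$ black balls in total; the state $i\in\{0,\dots,N/2\}$ is the number of white balls in urn 1. At each step one ball is drawn uniformly from each urn and the two are swapped, giving transition probabilities $p_i=\frac{4(N/2-i)^2}{N^2}$ (from $i$ to $i+1$), $q_i=\frac{4i^2}{N^2}$ (from $i$ to $i-1$), $r_i=1-p_i-q_i$ (stay). $T$ is the transition matrix with $T_{ij}$ the probability to move from $j$ to $i$, and $\rho_m(j;i)=(T^m)_{ij}$ is the distribution at time $m$ started from $j$. The stationary distribution is $\pi_i=\binom{N/2}{i}^2/\binom{N}{N/2}$. $\|\rho-\pi\|_V=\frac12\sum_i|\rho_i-\pi_i|$ is total variation distance; $\log$ is the natural logarithm. *)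

theory Defs
  imports "HOL-Analysis.Analysis"
begin

definition BL_p :: "nat \<Rightarrow> nat \<Rightarrow> real" where
  "BL_p N i = 4 * (real (N div 2) - real i)^2 / (real N)^2"

definition BL_q :: "nat \<Rightarrow> nat \<Rightarrow> real" where
  "BL_q N i = 4 * (real i)^2 / (real N)^2"

text \<open>BL_T N i j: probability to move from j to i (states in 0..N div 2).\<close>
definition BL_T :: "nat \<Rightarrow> nat \<Rightarrow> nat \<Rightarrow> real" where
  "BL_T N i j =
     (if i \<le> N div 2 \<and> j \<le> N div 2 then
        (if i = j + 1 then BL_p N j
         else if j = i + 1 then BL_q N j
         else if i = j then 1 - BL_p N j - BL_q N j
         else 0)
      else 0)"

text \<open>BL_rho N m j i = (T^m)_{ij}, the distribution at time m started from j.\<close>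
fun BL_rho :: "nat \<Rightarrow> nat \<Rightarrow> nat \<Rightarrow> nat \<Rightarrow> real" where
  "BL_rho N 0 j i = (if i = j then 1 else 0)"
| "BL_rho N (Suc m) j i = (\<Sum>k\<in>{0..N div 2}. BL_T N i k * BL_rho N m j k)"

definition BL_pi :: "nat \<Rightarrow> nat \<Rightarrow> real" where
  "BL_pi N i = real ((N div 2) choose i)^2 / real (N choose (N div 2))"

definition BL_tv :: "nat \<Rightarrow> (nat \<Rightarrow> real) \<Rightarrow> real" where
  "BL_tv N \<rho> = (1/2) * (\<Sum>i\<in>{0..N div 2}. \<bar>\<rho> i - BL_pi N i\<bar>)"

end

theory Submission
  imports Defs
begin

text \<open>The density \<open>u\<^sub>m = \<rho>\<^sub>m(j; \<cdot>) / \<pi>\<close> evolves by the transition operator \<open>K\<close>, which is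
  self-adjoint in \<open>L\<^sup>2(\<pi>)\<close>. The discrete gradient of \<open>K f\<close> is a tridiagonal matrix \<open>G\<close> applied to
  the gradient of \<open>f\<close>; \<open>G\<close> is self-adjoint for the edge conductances \<open>\<pi>\<^sub>i p\<^sub>i\<close>, and a weighted
  Schur test bounds its quadratic form by \<open>\<plusminus>\<beta>\<close> with \<open>\<beta> = 1 - 4/N\<close>. Hence the Dirichlet form
  contracts, \<open>\<E>(K f) \<le> \<beta>\<^sup>2 \<E>(f)\<close>. One step lowers the variance by at most \<open>2 \<E>\<close>, so summing the
  geometric series gives \<open>Var(u\<^sub>m) \<le> 2 \<beta>\<^sup>2\<^sup>m \<E>(u\<^sub>0) / (1 - \<beta>\<^sup>2) \<le> 8 \<beta>\<^sup>2\<^sup>m / (\<pi>\<^sub>j (1 - \<beta>\<^sup>2))\<close>.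
  Cauchy--Schwarz turns this into a total variation bound, and averaging over \<open>j\<close> against \<open>\<pi>\<close>
  cancels the factor \<open>1/\<pi>\<^sub>j\<close>; under the hypothesis on \<open>m\<close> the result is at most \<open>e\<^sup>-\<^sup>2\<^sup>c\<close>,
  so \<open>A = 1\<close> works.\<close>

lemma nonneg_quadratic_discriminant:
  fixes a b c :: real
  assumes nonneg: "\<And>t. 0 \<le> a + 2*b*t + c*t^2" and "0 \<le> c"
  shows "b^2 \<le> a*c"
proof (cases "c = 0")
  case True
  have "b = 0"
  proof (rule ccontr)
    assume "b \<noteq> 0"
    have "0 \<le> a + 2*b*(-(a+1)/(2*b)) + c*(-(a+1)/(2*b))^2" by (rule nonneg)
    with True \<open>b \<noteq> 0\<close> show False by (simp add: field_simps)
  qed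
  with True show ?thesis by simp
next
  case False
  with \<open>0 \<le> c\<close> have c: "c > 0" by simp
  have "0 \<le> a + 2*b*(-b/c) + c*(-b/c)^2" by (rule nonneg)
  with c have "0 \<le> a - b^2/c" by (simp add: field_simps power2_eq_square)
  with c show ?thesis by (simp add: field_simps)
qed

lemma psd_form_Cauchy_Schwarz:
  fixes B :: "'a \<Rightarrow> 'a \<Rightarrow> real"
  assumes sym: "\<And>i j. i \<in> I \<Longrightarrow> j \<in> I \<Longrightarrow> B i j = B j i"
    and psd: "\<And>x. 0 \<le> (\<Sum>i\<in>I. \<Sum>j\<in>I. B i j * x i * x j)"
  shows "(\<Sum>i\<in>I. \<Sum>j\<in>I. B i j * u i * v j)^2
          \<le> (\<Sum>i\<in>I. \<Sum>j\<in>I. B i j * u i * u j) * (\<Sum>i\<in>I. \<Sum>j\<in>I. B i j * v i * v j)"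
proof -
  define form where "form x y = (\<Sum>i\<in>I. \<Sum>j\<in>I. B i j * x i * y j)" for x y
  have form_sym: "form v u = form u v"
    unfolding form_def
    by (subst sum.swap) (intro sum.cong refl, simp add: sym mult_ac)
  have "0 \<le> form u u + 2 * form u v * t + form v v * t^2" for t
  proof -
    have "0 \<le> form (\<lambda>i. u i + t * v i) (\<lambda>i. u i + t * v i)"
      unfolding form_def by (rule psd)
    also have "\<dots> = form u u + t * form u v + t * form v u + t^2 * form v v"
      unfolding form_def
      by (simp add: algebra_simps power2_eq_square sum.distrib sum_distrib_left)
    finally show ?thesis by (simp add: form_sym algebra_simps)
  qed
  then have "(form u v)^2 \<le> form u u * form v v"
    by (rule nonneg_quadratic_discriminant) (simp add: form_def psd)
  then show ?thesis by (simp add: form_def)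
qed

lemma psd_form_image_bound:
  fixes B :: "'a \<Rightarrow> 'a \<Rightarrow> real"
  assumes sym: "\<And>i j. i \<in> I \<Longrightarrow> j \<in> I \<Longrightarrow> B i j = B j i"
    and psd: "\<And>y. 0 \<le> (\<Sum>i\<in>I. \<Sum>j\<in>I. B i j * y i * y j)"
    and bound: "\<And>y. (\<Sum>i\<in>I. \<Sum>j\<in>I. B i j * y i * y j) \<le> c * (\<Sum>i\<in>I. w i * (y i)^2)"
    and w: "\<And>i. i \<in> I \<Longrightarrow> 0 \<le> w i" and "0 \<le> c"
    and image: "\<And>i. i \<in> I \<Longrightarrow> (\<Sum>j\<in>I. B i j * x j) = w i * z i"
  shows "(\<Sum>i\<in>I. w i * (z i)^2) \<le> c * (\<Sum>i\<in>I. \<Sum>j\<in>I. B i j * x i * x j)"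
proof -
  define Nz where "Nz = (\<Sum>i\<in>I. w i * (z i)^2)"
  define Qx where "Qx = (\<Sum>i\<in>I. \<Sum>j\<in>I. B i j * x i * x j)"
  have "0 \<le> Nz"
    unfolding Nz_def using w by (intro sum_nonneg) simp
  have "0 \<le> Qx"
    unfolding Qx_def by (rule psd)
  have "(\<Sum>i\<in>I. \<Sum>j\<in>I. B i j * z i * x j) = Nz"
  proof -
    have "(\<Sum>j\<in>I. B i j * z i * x j) = z i * (\<Sum>j\<in>I. B i j * x j)" for i
      by (simp add: sum_distrib_left mult_ac)
    then have "(\<Sum>j\<in>I. B i j * z i * x j) = z i * (w i * z i)" if "i \<in> I" for i
      using image[OF that] by simp
    then show ?thesis
      unfolding Nz_def by (intro sum.cong refl) (simp add: power2_eq_square mult_ac)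
  qed
  then have "Nz^2 \<le> (\<Sum>i\<in>I. \<Sum>j\<in>I. B i j * z i * z j) * Qx"
    using psd_form_Cauchy_Schwarz[OF sym psd, of z x] by (simp add: Qx_def)
  also have "\<dots> \<le> c * Nz * Qx"
    using bound[of z] \<open>0 \<le> Qx\<close> by (intro mult_right_mono) (simp_all add: Nz_def)
  finally have "Nz * Nz \<le> Nz * (c * Qx)"
    by (simp add: power2_eq_square mult_ac)
  then show ?thesis
    using \<open>0 \<le> Nz\<close> \<open>0 \<le> Qx\<close> \<open>0 \<le> c\<close>
    by (cases "Nz = 0") (simp_all add: mult_le_cancel_left Nz_def Qx_def)
qed

text \<open>The form of \<open>\<beta> - M\<close> is positive and at most \<open>2 \<beta>\<close>, so by the previous lemma
  \<open>\<parallel>(\<beta> - M) x\<parallel>\<^sup>2 \<le> 2 \<beta> \<langle>(\<beta> - M) x, x\<rangle>\<close>; expanding \<open>\<parallel>M x\<parallel>\<^sup>2 = \<parallel>\<beta> x - (\<beta> - M) x\<parallel>\<^sup>2\<close> finishes.\<close>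

lemma selfadjoint_form_bound_imp_norm_bound:
  fixes w :: "'a \<Rightarrow> real" and M :: "'a \<Rightarrow> 'a \<Rightarrow> real"
  assumes "finite I" and w: "\<And>i. i \<in> I \<Longrightarrow> 0 \<le> w i"
    and sym: "\<And>i j. i \<in> I \<Longrightarrow> j \<in> I \<Longrightarrow> w i * M i j = w j * M j i"
    and "0 \<le> \<beta>"
    and upper: "\<And>x. (\<Sum>i\<in>I. \<Sum>j\<in>I. w i * M i j * x i * x j) \<le> \<beta> * (\<Sum>i\<in>I. w i * (x i)^2)"
    and lower: "\<And>x. - \<beta> * (\<Sum>i\<in>I. w i * (x i)^2) \<le> (\<Sum>i\<in>I. \<Sum>j\<in>I. w i * M i j * x i * x j)"
  shows "(\<Sum>i\<in>I. w i * (\<Sum>j\<in>I. M i j * x j)^2) \<le> \<beta>^2 * (\<Sum>i\<in>I. w i * (x i)^2)"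
proof -
  define P where "P y i = \<beta> * y i - (\<Sum>j\<in>I. M i j * y j)" for y i
  define B where "B i j = (if i = j then w i * \<beta> else 0) - w i * M i j" for i j
  have image: "(\<Sum>j\<in>I. B i j * y j) = w i * P y i" if "i \<in> I" for y i
  proof -
    have "(\<Sum>j\<in>I. B i j * y j)
        = (\<Sum>j\<in>I. if i = j then w i * \<beta> * y j else 0) - (\<Sum>j\<in>I. w i * (M i j * y j))"
      unfolding sum_subtractf[symmetric] by (intro sum.cong refl) (auto simp: B_def algebra_simps)
    also have "\<dots> = w i * P y i"
      using that \<open>finite I\<close> by (simp add: P_def sum_distrib_left algebra_simps)
    finally show ?thesis .
  qed
  have B_quad: "(\<Sum>i\<in>I. \<Sum>j\<in>I. B i j * y i * y j)
      = \<beta> * (\<Sum>i\<in>I. w i * (y i)^2) - (\<Sum>i\<in>I. \<Sum>j\<in>I. w i * M i j * y i * y j)" for y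
  proof -
    have "(\<Sum>i\<in>I. \<Sum>j\<in>I. B i j * y i * y j) = (\<Sum>i\<in>I. y i * (w i * P y i))"
      using image by (simp add: sum_distrib_left[symmetric] mult_ac)
    also have "\<dots> = \<beta> * (\<Sum>i\<in>I. w i * (y i)^2) - (\<Sum>i\<in>I. \<Sum>j\<in>I. w i * M i j * y i * y j)"
      by (simp add: P_def algebra_simps power2_eq_square sum_subtractf sum_distrib_left)
    finally show ?thesis .
  qed
  have "(\<Sum>i\<in>I. w i * (P x i)^2) \<le> 2 * \<beta> * (\<Sum>i\<in>I. \<Sum>j\<in>I. B i j * x i * x j)"
  proof (rule psd_form_image_bound[OF _ _ _ w])
    show "B i j = B j i" if "i \<in> I" "j \<in> I" for i j
      using sym[OF that] by (auto simp: B_def)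
    show "0 \<le> (\<Sum>i\<in>I. \<Sum>j\<in>I. B i j * y i * y j)" for y
      using upper[of y] by (simp add: B_quad)
    show "(\<Sum>i\<in>I. \<Sum>j\<in>I. B i j * y i * y j) \<le> 2 * \<beta> * (\<Sum>i\<in>I. w i * (y i)^2)" for y
      using lower[of y] by (simp add: B_quad)
  qed (use \<open>0 \<le> \<beta>\<close> image in auto)
  moreover have "(\<Sum>i\<in>I. w i * (\<Sum>j\<in>I. M i j * x j)^2)
      = \<beta>^2 * (\<Sum>i\<in>I. w i * (x i)^2) - 2 * \<beta> * (\<Sum>i\<in>I. w i * x i * P x i)
        + (\<Sum>i\<in>I. w i * (P x i)^2)"
  proof -
    have Mx: "(\<Sum>j\<in>I. M i j * x j) = \<beta> * x i - P x i" for i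
      by (simp add: P_def)
    show ?thesis
      unfolding Mx by (simp add: power2_eq_square algebra_simps sum.distrib sum_subtractf sum_distrib_left)
  qed
  moreover have "(\<Sum>i\<in>I. \<Sum>j\<in>I. B i j * x i * x j) = (\<Sum>i\<in>I. w i * x i * P x i)"
    using image by (simp add: sum_distrib_left[symmetric] mult_ac)
  ultimately show ?thesis
    by simp
qed

lemma weighted_Schur_test:
  fixes S :: "'a \<Rightarrow> 'a \<Rightarrow> real"
  assumes sym: "\<And>i j. i \<in> I \<Longrightarrow> j \<in> I \<Longrightarrow> S i j = S j i"
    and \<psi>: "\<And>i. i \<in> I \<Longrightarrow> 0 < \<psi> i"
  shows "(\<Sum>i\<in>I. \<Sum>j\<in>I. S i j * x i * x j) \<le> (\<Sum>i\<in>I. (x i)^2 * (\<Sum>j\<in>I. \<bar>S i j\<bar> * \<psi> j) / \<psi> i)"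
proof -
  define F where "F i j = \<bar>S i j\<bar> * (x i)^2 * \<psi> j / \<psi> i" for i j
  have entry: "S i j * x i * x j \<le> (F i j + F j i) / 2" if "i \<in> I" "j \<in> I" for i j
  proof -
    define t where "t = \<psi> j / \<psi> i"
    have "0 < t" using \<psi> that by (simp add: t_def)
    have "2 * \<bar>x i\<bar> * \<bar>x j\<bar> \<le> (\<bar>x i\<bar>)^2 * t + (\<bar>x j\<bar>)^2 / t"
    proof -
      have "0 \<le> (\<bar>x i\<bar> * t - \<bar>x j\<bar>)^2 / t" using \<open>0 < t\<close> by simp
      also have "\<dots> = (\<bar>x i\<bar>)^2 * t - 2 * \<bar>x i\<bar> * \<bar>x j\<bar> + (\<bar>x j\<bar>)^2 / t"
        using \<open>0 < t\<close> by (simp add: field_simps power2_eq_square)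
      finally show ?thesis by simp
    qed
    have "S i j * x i * x j \<le> \<bar>S i j\<bar> * (\<bar>x i\<bar> * \<bar>x j\<bar>)"
      by (metis abs_ge_self abs_mult mult.assoc)
    also have "\<dots> \<le> \<bar>S i j\<bar> * (((\<bar>x i\<bar>)^2 * t + (\<bar>x j\<bar>)^2 / t) / 2)"
      using \<open>2 * \<bar>x i\<bar> * \<bar>x j\<bar> \<le> _\<close> by (intro mult_left_mono) auto
    also have "\<dots> = (F i j + F j i) / 2"
      using \<psi> that sym[OF that] by (simp add: F_def t_def field_simps)
    finally show ?thesis .
  qed
  have "(\<Sum>i\<in>I. \<Sum>j\<in>I. S i j * x i * x j) \<le> (\<Sum>i\<in>I. \<Sum>j\<in>I. (F i j + F j i) / 2)"
    by (intro sum_mono entry)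
  also have "\<dots> = (\<Sum>i\<in>I. \<Sum>j\<in>I. F i j)"
    by (simp add: sum.distrib sum_divide_distrib[symmetric] sum.swap[of "\<lambda>i j. F j i"])
  also have "\<dots> = (\<Sum>i\<in>I. (x i)^2 * (\<Sum>j\<in>I. \<bar>S i j\<bar> * \<psi> j) / \<psi> i)"
    by (simp add: F_def sum_distrib_left sum_divide_distrib mult_ac)
  finally show ?thesis .
qed

lemma weighted_mean_abs_le_sqrt:
  fixes w h :: "'a \<Rightarrow> real"
  assumes "\<And>i. 0 \<le> w i" and "(\<Sum>i\<in>A. w i) = 1"
  shows "(\<Sum>i\<in>A. w i * \<bar>h i\<bar>) \<le> sqrt (\<Sum>i\<in>A. w i * (h i)^2)"
proof -
  have "(\<Sum>i\<in>A. sqrt (w i) * (sqrt (w i) * \<bar>h i\<bar>))^2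
      \<le> (\<Sum>i\<in>A. (sqrt (w i))^2) * (\<Sum>i\<in>A. (sqrt (w i) * \<bar>h i\<bar>)^2)"
    by (rule Cauchy_Schwarz_ineq_sum)
  also have "(\<Sum>i\<in>A. sqrt (w i) * (sqrt (w i) * \<bar>h i\<bar>)) = (\<Sum>i\<in>A. w i * \<bar>h i\<bar>)"
    using assms(1) by (intro sum.cong refl) (simp add: mult.assoc[symmetric])
  also have "(\<Sum>i\<in>A. (sqrt (w i) * \<bar>h i\<bar>)^2) = (\<Sum>i\<in>A. w i * (h i)^2)"
    using assms(1) by (intro sum.cong refl) (simp add: power_mult_distrib)
  finally show ?thesis using assms by (simp add: real_le_rsqrt)
qed

lemma telescoping_geometric_bound:
  fixes X e :: "nat \<Rightarrow> real"
  assumes r: "0 \<le> r" "r < 1" and "0 \<le> C"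
    and loss: "\<And>m. X m - X (Suc m) \<le> e m"
    and contr: "\<And>m. e (Suc m) \<le> r * e m"
    and dom: "\<And>m. X m \<le> C * e m"
  shows "X m \<le> r^m * e 0 / (1 - r)"
proof -
  have e_pow: "e (l + k) \<le> r^k * e l" for l k
  proof (induction k)
    case (Suc k)
    have "e (l + Suc k) \<le> r * e (l + k)" using contr by simp
    also have "\<dots> \<le> r * (r^k * e l)" using Suc r by (intro mult_left_mono) auto
    finally show ?case by simp
  qed simp
  have tail: "X m \<le> C * r^k * e m + e m * (1 - r^k) / (1 - r)" for k
  proof -
    have "X m \<le> X (m + k) + e m * (1 - r^k) / (1 - r)"
    proof (induction k)
      case (Suc k)
      have "X (m + k) \<le> X (m + Suc k) + r^k * e m"
        using loss[of "m + k"] e_pow[of m k] by simp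
      moreover have "e m * (1 - r^k) / (1 - r) + r^k * e m = e m * (1 - r^Suc k) / (1 - r)"
        using r by (simp add: field_simps)
      ultimately show ?case using Suc by linarith
    qed simp
    moreover have "X (m + k) \<le> C * r^k * e m"
      using dom[of "m + k"] mult_left_mono[OF e_pow[of m k] \<open>0 \<le> C\<close>] by (simp add: mult.assoc)
    ultimately show ?thesis by simp
  qed
  have "(\<lambda>k. C * r^k * e m + e m * (1 - r^k) / (1 - r)) \<longlonglongrightarrow> C * 0 * e m + e m * (1 - 0) / (1 - r)"
    using r by (intro tendsto_intros LIMSEQ_power_zero) auto
  then have "X m \<le> C * 0 * e m + e m * (1 - 0) / (1 - r)"
    by (rule LIMSEQ_le_const) (use tail in simp)
  also have "\<dots> = e m / (1 - r)"
    by simp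
  also have "\<dots> \<le> r^m * e 0 / (1 - r)"
    using e_pow[of 0 m] r by (intro divide_right_mono) auto
  finally show ?thesis .
qed

section \<open>The balanced Bernoulli--Laplace chain\<close>

text \<open>The chain with \<open>N = 2 n\<close> balls; \<open>\<mu>\<close> is the stationary distribution \<open>\<pi>\<close>.\<close>

locale balanced_Bernoulli_Laplace =
  fixes n :: nat
  assumes three_le_n: "3 \<le> n"
begin

definition p :: "nat \<Rightarrow> real" where "p i = (real n - real i)^2 / (real n)^2"
definition q :: "nat \<Rightarrow> real" where "q i = (real i)^2 / (real n)^2"
definition \<mu> :: "nat \<Rightarrow> real" where "\<mu> i = real (n choose i)^2 / real ((2*n) choose n)"

definition cond :: "nat \<Rightarrow> real" where "cond i = \<mu> i * p i"

text \<open>The transition operator acting on functions, \<open>K f i = E\<^sub>i f(X\<^sub>1)\<close>.\<close>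
definition K :: "(nat \<Rightarrow> real) \<Rightarrow> nat \<Rightarrow> real" where
  "K f i = q i * f (i - 1) + (1 - p i - q i) * f i + p i * f (Suc i)"

definition grad :: "(nat \<Rightarrow> real) \<Rightarrow> nat \<Rightarrow> real" where "grad f i = f (Suc i) - f i"
definition dirichlet :: "(nat \<Rightarrow> real) \<Rightarrow> real" where
  "dirichlet f = (\<Sum>i<n. cond i * (grad f i)^2)"
definition sqnorm :: "(nat \<Rightarrow> real) \<Rightarrow> real" where "sqnorm f = (\<Sum>i\<le>n. \<mu> i * (f i)^2)"
definition \<beta> :: real where "\<beta> = 1 - 2 / real n"

lemma n_pos: "0 < real n" and three_le_real_n: "3 \<le> real n"
  using three_le_n by simp_all

lemma p_nonneg: "0 \<le> p i" and q_nonneg: "0 \<le> q i"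
  by (simp_all add: p_def q_def)

lemma q_0 [simp]: "q 0 = 0" and p_n [simp]: "p n = 0"
  by (simp_all add: q_def p_def)

lemma p_pos: "i < n \<Longrightarrow> 0 < p i"
  using n_pos by (simp add: p_def)

lemma p_plus_q_le_1:
  assumes "i \<le> n" shows "p i + q i \<le> 1"
proof -
  have "(real n - real i)^2 + (real i)^2 \<le> (real n)^2"
    using assms by (simp add: power2_eq_square algebra_simps mult_left_mono)
  then show ?thesis
    using n_pos by (simp add: p_def q_def add_divide_distrib[symmetric])
qed

lemma \<mu>_pos: "i \<le> n \<Longrightarrow> 0 < \<mu> i" and \<mu>_nonneg: "0 \<le> \<mu> i"
  by (simp_all add: \<mu>_def)

lemma \<mu>_nonzero: "i \<le> n \<Longrightarrow> \<mu> i \<noteq> 0"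
  using \<mu>_pos by fastforce

lemma sum_\<mu>: "(\<Sum>i\<le>n. \<mu> i) = 1"
proof -
  have "(\<Sum>i\<le>n. real ((n choose i)^2)) = real ((2*n) choose n)"
    by (simp only: of_nat_sum[symmetric] choose_square_sum)
  then show ?thesis
    by (simp add: \<mu>_def sum_divide_distrib[symmetric])
qed

lemma detailed_balance:
  assumes "i < n" shows "\<mu> i * p i = \<mu> (Suc i) * q (Suc i)"
proof -
  have "Suc i * (n choose Suc i) = (n - i) * (n choose i)"
    using assms by (metis Suc_times_binomial binomial_absorb_comp Suc_pred' less_nat_zero_code neq0_conv)
  then have binom: "(real i + 1) * real (n choose Suc i) = (real n - real i) * real (n choose i)"
    using assms by (metis of_nat_mult of_nat_diff less_imp_le of_nat_Suc add.commute)
  have "\<mu> i * p i = ((real n - real i) * real (n choose i))^2 / (real ((2*n) choose n) * (real n)^2)"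
    by (simp add: \<mu>_def p_def power_mult_distrib)
  also have "\<dots> = \<mu> (Suc i) * q (Suc i)"
    by (simp add: binom[symmetric] \<mu>_def q_def power_mult_distrib add.commute)
  finally show ?thesis .
qed

lemma cond_pos: "i < n \<Longrightarrow> 0 < cond i"
  by (simp add: cond_def \<mu>_pos p_pos)

lemma dirichlet_nonneg: "0 \<le> dirichlet f"
  unfolding dirichlet_def using cond_pos by (intro sum_nonneg) (simp add: less_imp_le)

lemma \<beta>_nonneg: "0 \<le> \<beta>" and \<beta>_less_1: "\<beta> < 1"
  using three_le_real_n by (simp_all add: \<beta>_def field_simps)

lemma \<beta>_square_less_1: "\<beta>^2 < 1"
  using \<beta>_nonneg \<beta>_less_1 by (simp add: abs_square_less_1)

subsection \<open>Contraction of the Dirichlet form\<close>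

definition G_off :: "nat \<Rightarrow> nat \<Rightarrow> real" where
  "G_off i j = (if j = Suc i then p (Suc i) else if Suc j = i then q i else 0)"
definition G_diag :: "nat \<Rightarrow> real" where "G_diag i = 1 - q (Suc i) - p i"
definition G :: "nat \<Rightarrow> nat \<Rightarrow> real" where "G i j = G_off i j + (if j = i then G_diag i else 0)"

lemma G_off_nonneg: "0 \<le> G_off i j"
  by (simp add: G_off_def p_nonneg q_nonneg)

lemma sum_G_off:
  assumes "i < n"
  shows "(\<Sum>j<n. G_off i j * g j) = p (Suc i) * g (Suc i) + q i * g (i - 1)"
proof -
  have "G_off i j * g j = (if j = Suc i then p (Suc i) * g (Suc i) else 0)
        + (if 0 < i \<and> j = i - 1 then q i * g (i - 1) else 0)" for j
    by (auto simp: G_off_def)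
  then have "(\<Sum>j<n. G_off i j * g j) = (if Suc i < n then p (Suc i) * g (Suc i) else 0)
          + (if 0 < i then q i * g (i - 1) else 0)"
    using assms by (simp add: sum.distrib)
  also have "\<dots> = p (Suc i) * g (Suc i) + q i * g (i - 1)"
    using assms by (cases "Suc i = n"; cases "i = 0") auto
  finally show ?thesis .
qed

lemma sum_G:
  assumes "i < n"
  shows "(\<Sum>j<n. G i j * g j) = p (Suc i) * g (Suc i) + q i * g (i - 1) + G_diag i * g i"
  using assms by (simp add: G_def distrib_right sum.distrib sum_G_off if_distrib[of "\<lambda>x. x * _"] cong: if_cong)

lemma grad_K:
  assumes "i < n"
  shows "grad (K f) i = (\<Sum>j<n. G i j * grad f j)"
proof -
  have q_term: "q i * (f (Suc (i - 1)) - f (i - 1)) = q i * (f i - f (i - 1))"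
    by (cases i) auto
  show ?thesis
    unfolding sum_G[OF assms] grad_def q_term by (simp add: K_def G_diag_def algebra_simps)
qed

lemma cond_G_off_sym:
  assumes "i < n" "j < n" shows "cond i * G_off i j = cond j * G_off j i"
  using assms detailed_balance[of i] detailed_balance[of j]
  by (auto simp: cond_def G_off_def)

lemma cond_G_sym: "i < n \<Longrightarrow> j < n \<Longrightarrow> cond i * G i j = cond j * G j i"
  using cond_G_off_sym[of i j] by (auto simp: G_def algebra_simps)

lemma G_row_sum: "G_diag i + p (Suc i) + q i = \<beta>"
  using n_pos by (simp add: G_diag_def p_def q_def \<beta>_def field_simps power2_eq_square)

lemma G_form_split:
  "(\<Sum>i<n. \<Sum>j<n. cond i * G i j * x i * x j)
     = (\<Sum>i<n. cond i * G_diag i * (x i)^2) + (\<Sum>i<n. \<Sum>j<n. (cond i * G_off i j) * x i * x j)"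
proof -
  have "(\<Sum>j<n. cond i * G i j * x i * x j)
      = cond i * G_diag i * (x i)^2 + (\<Sum>j<n. (cond i * G_off i j) * x i * x j)" if "i < n" for i
    using that
    by (simp add: G_def algebra_simps power2_eq_square sum.distrib if_distrib[of "\<lambda>y. _ * y"] cong: if_cong)
  then show ?thesis by (simp add: sum.distrib)
qed

lemma G_form_upper:
  "(\<Sum>i<n. \<Sum>j<n. cond i * G i j * x i * x j) \<le> \<beta> * (\<Sum>i<n. cond i * (x i)^2)"
proof -
  have "(\<Sum>i<n. \<Sum>j<n. (cond i * G_off i j) * x i * x j)
      \<le> (\<Sum>i<n. (x i)^2 * (\<Sum>j<n. \<bar>cond i * G_off i j\<bar> * 1) / 1)"
    by (rule weighted_Schur_test) (auto simp: cond_G_off_sym)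
  also have "\<dots> = (\<Sum>i<n. cond i * (p (Suc i) + q i) * (x i)^2)"
    using less_imp_le[OF cond_pos] G_off_nonneg sum_G_off[of _ "\<lambda>_. 1"]
    by (intro sum.cong refl) (simp add: abs_mult sum_distrib_left[symmetric])
  finally have "(\<Sum>i<n. \<Sum>j<n. (cond i * G_off i j) * x i * x j)
      \<le> (\<Sum>i<n. cond i * (p (Suc i) + q i) * (x i)^2)" .
  moreover have "(\<Sum>i<n. cond i * G_diag i * (x i)^2) + (\<Sum>i<n. cond i * (p (Suc i) + q i) * (x i)^2)
      = \<beta> * (\<Sum>i<n. cond i * (x i)^2)"
    unfolding sum.distrib[symmetric] sum_distrib_left
  proof (intro sum.cong refl)
    fix i
    show "cond i * G_diag i * (x i)^2 + cond i * (p (Suc i) + q i) * (x i)^2 = \<beta> * (cond i * (x i)^2)"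
      unfolding G_row_sum[of i, symmetric] by (simp add: algebra_simps)
  qed
  ultimately show ?thesis
    unfolding G_form_split by linarith
qed

text \<open>Schur-test weights for the lower bound on \<open>G\<close>. The boundary rows \<open>0\<close> and \<open>n - 1\<close> have the most
  negative diagonal entry \<open>-1/n\<^sup>2\<close>; giving them weight \<open>s\<close> makes their Schur inequality an equality.\<close>
definition s :: real where "s = (real n - 1)^2 / ((real n)^2 - 2 * real n - 1)"
definition \<psi> :: "nat \<Rightarrow> real" where "\<psi> i = (if i = 0 \<or> i = n - 1 then s else 1)"

lemma s_denominator_pos: "0 < (real n)^2 - 2 * real n - 1"
proof -
  have "(real n)^2 - 2 * real n - 1 = (real n - 3) * (real n + 1) + 2"
    by (simp add: algebra_simps power2_eq_square)
  then show ?thesis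
    using three_le_real_n by (smt (verit) mult_nonneg_nonneg)
qed

lemma one_le_s: "1 \<le> s"
  using s_denominator_pos by (simp add: s_def power2_eq_square algebra_simps)

lemma \<psi>_pos: "0 < \<psi> i" and \<psi>_le_s: "\<psi> i \<le> s"
  using one_le_s by (simp_all add: \<psi>_def)

lemma G_diag_plus_\<beta>_boundary:
  "G_diag 0 + \<beta> = ((real n)^2 - 2 * real n - 1) / (real n)^2"
  "G_diag (n - 1) + \<beta> = ((real n)^2 - 2 * real n - 1) / (real n)^2"
proof -
  have "Suc (n - 1) = n" and "real (n - 1) = real n - 1"
    using three_le_n by simp_all
  then show "G_diag (n - 1) + \<beta> = ((real n)^2 - 2 * real n - 1) / (real n)^2"
    unfolding G_diag_def p_def q_def \<beta>_def
    using n_pos by (simp add: field_simps power2_eq_square)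
  show "G_diag 0 + \<beta> = ((real n)^2 - 2 * real n - 1) / (real n)^2"
    unfolding G_diag_def p_def q_def \<beta>_def
    using n_pos by (simp add: field_simps power2_eq_square)
qed

lemma Schur_row_first: "p 1 = (G_diag 0 + \<beta>) * s"
  unfolding G_diag_plus_\<beta>_boundary s_def
  using s_denominator_pos by (simp add: p_def)

lemma Schur_row_last: "q (n - 1) = (G_diag (n - 1) + \<beta>) * s"
proof -
  have "real (n - 1) = real n - 1"
    using three_le_n by simp
  then show ?thesis
    unfolding G_diag_plus_\<beta>_boundary s_def
    using s_denominator_pos by (simp add: q_def)
qed

lemma Schur_row_interior:
  assumes "0 < i" "i < n - 1"
  shows "(1 + s) * (p (Suc i) + q i) \<le> 2 * \<beta>"
proof -
  define D where "D = (real n)^2 - 2 * real n - 1"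
  have "0 < D" unfolding D_def by (rule s_denominator_pos)
  have "1 \<le> real i" "real i \<le> real n - 2"
    using assms by linarith+
  moreover have "D - ((real n - real (Suc i))^2 + (real i)^2)
      = 2 * (real n - 3) + 2 * (real i - 1) * (real n - 2 - real i)"
    by (simp add: D_def algebra_simps power2_eq_square)
  ultimately have sq: "(real n - real (Suc i))^2 + (real i)^2 \<le> D"
    using three_le_real_n by (smt (verit) mult_nonneg_nonneg)
  have one_s: "1 + s = 2 * real n * (real n - 2) / D"
    using \<open>0 < D\<close> by (simp add: s_def D_def field_simps power2_eq_square)
  have "(1 + s) * (p (Suc i) + q i)
      = 2 * real n * (real n - 2) / D * (((real n - real (Suc i))^2 + (real i)^2) / (real n)^2)"
    by (simp add: one_s p_def q_def add_divide_distrib)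
  also have "\<dots> \<le> 2 * real n * (real n - 2) / D * (D / (real n)^2)"
    using sq \<open>0 < D\<close> three_le_real_n by (intro mult_left_mono divide_right_mono) auto
  also have "\<dots> = 2 * \<beta>"
    using \<open>0 < D\<close> n_pos by (simp add: \<beta>_def field_simps power2_eq_square)
  finally show ?thesis .
qed

lemma Schur_row_bound:
  assumes "i < n"
  shows "p (Suc i) * \<psi> (Suc i) + q i * \<psi> (i - 1) \<le> (G_diag i + \<beta>) * \<psi> i"
proof -
  consider "i = 0" | "i = n - 1" "i \<noteq> 0" | "0 < i" "i < n - 1"
    using assms by linarith
  then show ?thesis
  proof cases
    case 1
    have "\<psi> 1 = 1"
      using three_le_n by (simp add: \<psi>_def)
    with 1 show ?thesis
      using Schur_row_first by (simp add: \<psi>_def)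
  next
    case 2
    then have "Suc i = n" "\<psi> (i - 1) = 1"
      using three_le_n by (simp_all add: \<psi>_def)
    then show ?thesis
      using 2 Schur_row_last by (simp add: \<psi>_def)
  next
    case 3
    have "p (Suc i) * \<psi> (Suc i) + q i * \<psi> (i - 1) \<le> p (Suc i) * s + q i * s"
      using \<psi>_le_s p_nonneg q_nonneg by (intro add_mono mult_left_mono)
    also have "\<dots> = s * (p (Suc i) + q i)"
      by (simp add: algebra_simps)
    also have "\<dots> \<le> G_diag i + \<beta>"
      using Schur_row_interior[OF 3] G_row_sum[of i] by (simp add: algebra_simps)
    finally show ?thesis
      using 3 by (simp add: \<psi>_def)
  qed
qed

lemma G_form_lower:
  "- \<beta> * (\<Sum>i<n. cond i * (x i)^2) \<le> (\<Sum>i<n. \<Sum>j<n. cond i * G i j * x i * x j)"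
proof -
  have "(\<Sum>i<n. \<Sum>j<n. - (cond i * G_off i j) * x i * x j)
      \<le> (\<Sum>i<n. (x i)^2 * (\<Sum>j<n. \<bar>- (cond i * G_off i j)\<bar> * \<psi> j) / \<psi> i)"
    by (rule weighted_Schur_test) (auto simp: cond_G_off_sym \<psi>_pos)
  also have "\<dots> \<le> (\<Sum>i<n. (x i)^2 * (cond i * (G_diag i + \<beta>)))"
  proof (intro sum_mono)
    fix i assume "i \<in> {..<n}"
    then have "i < n" by simp
    have "(\<Sum>j<n. \<bar>- (cond i * G_off i j)\<bar> * \<psi> j) = cond i * (p (Suc i) * \<psi> (Suc i) + q i * \<psi> (i - 1))"
      using less_imp_le[OF cond_pos[OF \<open>i < n\<close>]] G_off_nonneg sum_G_off[OF \<open>i < n\<close>, of \<psi>]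
      by (simp add: abs_mult sum_distrib_left[symmetric] mult.assoc)
    also have "\<dots> \<le> cond i * ((G_diag i + \<beta>) * \<psi> i)"
      using cond_pos[OF \<open>i < n\<close>] Schur_row_bound[OF \<open>i < n\<close>] by (intro mult_left_mono) auto
    finally have "(\<Sum>j<n. \<bar>- (cond i * G_off i j)\<bar> * \<psi> j) / \<psi> i \<le> cond i * (G_diag i + \<beta>)"
      using \<psi>_pos[of i] by (simp add: divide_le_eq)
    then show "(x i)^2 * (\<Sum>j<n. \<bar>- (cond i * G_off i j)\<bar> * \<psi> j) / \<psi> i \<le> (x i)^2 * (cond i * (G_diag i + \<beta>))"
      by (metis mult_left_mono times_divide_eq_right zero_le_power2)
  qed
  finally have "- (\<Sum>i<n. \<Sum>j<n. (cond i * G_off i j) * x i * x j) \<le> (\<Sum>i<n. (x i)^2 * (cond i * (G_diag i + \<beta>)))"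
    by (simp add: sum_negf)
  moreover have "(\<Sum>i<n. cond i * G_diag i * (x i)^2) - (\<Sum>i<n. (x i)^2 * (cond i * (G_diag i + \<beta>)))
      = - \<beta> * (\<Sum>i<n. cond i * (x i)^2)"
    unfolding sum_subtractf[symmetric] sum_distrib_left
    by (intro sum.cong refl) (simp add: algebra_simps)
  ultimately show ?thesis
    unfolding G_form_split by linarith
qed

lemma dirichlet_K_le: "dirichlet (K f) \<le> \<beta>^2 * dirichlet f"
proof -
  have "dirichlet (K f) = (\<Sum>i<n. cond i * (\<Sum>j<n. G i j * grad f j)^2)"
    unfolding dirichlet_def by (intro sum.cong refl) (simp add: grad_K)
  also have "\<dots> \<le> \<beta>^2 * dirichlet f"
    unfolding dirichlet_def
    by (rule selfadjoint_form_bound_imp_norm_bound[OF _ _ _ \<beta>_nonneg G_form_upper G_form_lower])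
      (auto simp: less_imp_le[OF cond_pos] cond_G_sym)
  finally show ?thesis .
qed

subsection \<open>Decay of the variance\<close>

lemma K_minus_const: "K (\<lambda>i. f i - c) i = K f i - c"
  by (simp add: K_def algebra_simps)

lemma dirichlet_minus_const: "dirichlet (\<lambda>i. f i - c) = dirichlet f"
  by (simp add: dirichlet_def grad_def)

lemma dirichlet_cong: "(\<And>i. i \<le> n \<Longrightarrow> f i = g i) \<Longrightarrow> dirichlet f = dirichlet g"
  unfolding dirichlet_def grad_def by (intro sum.cong refl) auto

lemma summation_by_parts: "(\<Sum>i\<le>n. \<mu> i * f i * (f i - K f i)) = dirichlet f"
proof -
  have split: "\<mu> i * f i * (f i - K f i)
      = \<mu> i * p i * f i * (f i - f (Suc i)) + \<mu> i * q i * f i * (f i - f (i - 1))" for i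
    by (simp add: K_def algebra_simps)
  have forward: "(\<Sum>i\<le>n. \<mu> i * p i * f i * (f i - f (Suc i)))
      = (\<Sum>i<n. cond i * f i * (f i - f (Suc i)))"
    by (simp add: lessThan_Suc_atMost[symmetric] cond_def)
  have backward: "(\<Sum>i\<le>n. \<mu> i * q i * f i * (f i - f (i - 1)))
      = (\<Sum>i<n. cond i * f (Suc i) * (f (Suc i) - f i))"
    by (simp add: lessThan_Suc_atMost[symmetric] sum.lessThan_Suc_shift cond_def detailed_balance
        del: sum.lessThan_Suc)
  have "(\<Sum>i\<le>n. \<mu> i * f i * (f i - K f i))
      = (\<Sum>i<n. cond i * f i * (f i - f (Suc i))) + (\<Sum>i<n. cond i * f (Suc i) * (f (Suc i) - f i))"
    unfolding split sum.distrib forward backward ..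
  also have "\<dots> = dirichlet f"
    unfolding dirichlet_def grad_def sum.distrib[symmetric]
    by (intro sum.cong refl) (simp add: algebra_simps power2_eq_square)
  finally show ?thesis .
qed

lemma sqnorm_minus_sqnorm_K_le: "sqnorm g - sqnorm (K g) \<le> 2 * dirichlet g"
proof -
  have "sqnorm g - sqnorm (K g)
      = 2 * (\<Sum>i\<le>n. \<mu> i * g i * (g i - K g i)) - (\<Sum>i\<le>n. \<mu> i * (g i - K g i)^2)"
    unfolding sqnorm_def sum_subtractf[symmetric] sum_distrib_left
    by (intro sum.cong refl) (simp add: algebra_simps power2_eq_square)
  also have "\<dots> \<le> 2 * (\<Sum>i\<le>n. \<mu> i * g i * (g i - K g i))"
    using \<mu>_nonneg by (simp add: sum_nonneg)
  finally show ?thesis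
    unfolding summation_by_parts .
qed

lemma cond_le_\<mu>:
  assumes "i < n" shows "cond i \<le> \<mu> i" and "cond i \<le> \<mu> (Suc i)"
proof -
  show "cond i \<le> \<mu> i"
    using p_plus_q_le_1[of i] q_nonneg[of i] \<mu>_nonneg[of i] assms
    by (simp add: cond_def mult_left_le)
  show "cond i \<le> \<mu> (Suc i)"
    using p_plus_q_le_1[of "Suc i"] p_nonneg[of "Suc i"] \<mu>_nonneg[of "Suc i"] assms
    by (simp add: cond_def detailed_balance mult_left_le)
qed

lemma dirichlet_le_sqnorm: "dirichlet f \<le> 4 * sqnorm f"
proof -
  have "dirichlet f \<le> (\<Sum>i<n. 2 * (cond i * (f (Suc i))^2) + 2 * (cond i * (f i)^2))"
    unfolding dirichlet_def grad_def
  proof (intro sum_mono)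
    fix i assume "i \<in> {..<n}"
    have "(f (Suc i) - f i)^2 \<le> 2 * (f (Suc i))^2 + 2 * (f i)^2"
      using zero_le_power2[of "f (Suc i) + f i"] by (simp add: power2_eq_square algebra_simps)
    moreover have "0 \<le> cond i"
      using cond_pos[of i] \<open>i \<in> {..<n}\<close> by simp
    ultimately have "cond i * (f (Suc i) - f i)^2 \<le> cond i * (2 * (f (Suc i))^2 + 2 * (f i)^2)"
      by (rule mult_left_mono)
    then show "cond i * (f (Suc i) - f i)^2 \<le> 2 * (cond i * (f (Suc i))^2) + 2 * (cond i * (f i)^2)"
      by (simp add: algebra_simps)
  qed
  also have "\<dots> \<le> (\<Sum>i<n. 2 * (\<mu> (Suc i) * (f (Suc i))^2) + 2 * (\<mu> i * (f i)^2))"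
    using cond_le_\<mu> by (intro sum_mono add_mono mult_left_mono mult_right_mono) auto
  also have "\<dots> = 2 * (\<Sum>i<n. \<mu> (Suc i) * (f (Suc i))^2) + 2 * (\<Sum>i<n. \<mu> i * (f i)^2)"
    by (simp add: sum.distrib sum_distrib_left)
  also have "\<dots> \<le> 2 * sqnorm f + 2 * sqnorm f"
  proof -
    have "(\<Sum>i<n. \<mu> (Suc i) * (f (Suc i))^2) \<le> sqnorm f"
      unfolding sqnorm_def lessThan_Suc_atMost[symmetric] sum.lessThan_Suc_shift
      using \<mu>_nonneg[of 0] by simp
    moreover have "(\<Sum>i<n. \<mu> i * (f i)^2) \<le> sqnorm f"
      unfolding sqnorm_def using \<mu>_nonneg by (intro sum_mono2) auto
    ultimately show ?thesis by simp
  qed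
  finally show ?thesis by simp
qed

text \<open>Any Poincare constant will do here: this bound only serves to make the variance tend to zero
  in the telescoping argument below.\<close>

lemma crude_Poincare:
  assumes "(\<Sum>i\<le>n. \<mu> i * g i) = 0"
  shows "sqnorm g \<le> real n * (\<Sum>k<n. 1 / cond k) * dirichlet g"
proof -
  have grad_sq: "(grad g k)^2 \<le> dirichlet g / cond k" if "k < n" for k
  proof -
    have "cond k * (grad g k)^2 \<le> dirichlet g"
      unfolding dirichlet_def using that cond_pos
      by (intro member_le_sum[where f="\<lambda>i. cond i * (grad g i)^2"]) (auto simp: less_imp_le)
    then show ?thesis
      using cond_pos[OF that] by (simp add: field_simps)
  qed
  have oscillation: "(g i - g 0)^2 \<le> real n * (\<Sum>k<n. (grad g k)^2)" if "i \<le> n" for i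
  proof -
    have "\<bar>g i - g 0\<bar> \<le> (\<Sum>k<i. \<bar>grad g k\<bar>)"
      unfolding grad_def sum_lessThan_telescope[symmetric] by (rule sum_abs)
    also have "\<dots> \<le> (\<Sum>k<n. \<bar>grad g k\<bar>)"
      using that by (intro sum_mono2) auto
    finally have "(g i - g 0)^2 \<le> (\<Sum>k<n. \<bar>grad g k\<bar>)^2"
      by (metis abs_ge_zero power2_abs power_mono)
    also have "\<dots> \<le> (\<Sum>k<n. (\<bar>grad g k\<bar>)^2) * card {..<n::nat}"
      by (rule sum_squared_le_sum_of_squares)
    finally show ?thesis by (simp add: mult.commute)
  qed
  have "(\<Sum>i\<le>n. \<mu> i * (g i - g 0)^2)
      = sqnorm g - 2 * g 0 * (\<Sum>i\<le>n. \<mu> i * g i) + (g 0)^2 * (\<Sum>i\<le>n. \<mu> i)"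
    unfolding sqnorm_def
    by (simp add: power2_eq_square algebra_simps sum.distrib sum_subtractf sum_distrib_left)
  then have "sqnorm g \<le> (\<Sum>i\<le>n. \<mu> i * (g i - g 0)^2)"
    using assms by (simp add: sum_\<mu>)
  also have "\<dots> \<le> (\<Sum>i\<le>n. \<mu> i * (real n * (\<Sum>k<n. (grad g k)^2)))"
    using oscillation \<mu>_nonneg by (intro sum_mono mult_left_mono) auto
  also have "\<dots> = real n * (\<Sum>k<n. (grad g k)^2)"
    by (simp add: sum_distrib_right[symmetric] sum_\<mu>)
  also have "\<dots> \<le> real n * (\<Sum>k<n. dirichlet g / cond k)"
    using grad_sq by (intro mult_left_mono sum_mono) auto
  finally show ?thesis
    by (simp add: sum_distrib_left sum_divide_distrib mult_ac)
qed

lemma density_variance_decay: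
  fixes u :: "nat \<Rightarrow> nat \<Rightarrow> real"
  assumes step: "\<And>m i. i \<le> n \<Longrightarrow> u (Suc m) i = K (u m) i"
    and mean: "\<And>m. (\<Sum>i\<le>n. \<mu> i * u m i) = 1"
  shows "sqnorm (\<lambda>i. u m i - 1) \<le> (\<beta>^2)^m * (2 * dirichlet (u 0)) / (1 - \<beta>^2)"
proof -
  define C where "C = real n * (\<Sum>k<n. 1 / cond k)"
  have "0 \<le> C"
    unfolding C_def using cond_pos by (intro mult_nonneg_nonneg sum_nonneg) (auto simp: less_imp_le)
  have loss: "sqnorm (\<lambda>i. u m i - 1) - sqnorm (\<lambda>i. u (Suc m) i - 1) \<le> 2 * dirichlet (u m)" for m
  proof -
    have "sqnorm (\<lambda>i. u (Suc m) i - 1) = sqnorm (K (\<lambda>i. u m i - 1))"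
      unfolding sqnorm_def K_minus_const by (intro sum.cong refl) (simp add: step)
    then show ?thesis
      using sqnorm_minus_sqnorm_K_le[of "\<lambda>i. u m i - 1"] by (simp add: dirichlet_minus_const)
  qed
  have contraction: "2 * dirichlet (u (Suc m)) \<le> \<beta>^2 * (2 * dirichlet (u m))" for m
    using dirichlet_K_le[of "u m"] dirichlet_cong[of "u (Suc m)" "K (u m)"] step by simp
  have domination: "sqnorm (\<lambda>i. u m i - 1) \<le> C * (2 * dirichlet (u m))" for m
  proof -
    have "(\<Sum>i\<le>n. \<mu> i * (u m i - 1)) = 0"
      using mean[of m] sum_\<mu> by (simp add: algebra_simps sum_subtractf)
    then have "sqnorm (\<lambda>i. u m i - 1) \<le> C * dirichlet (u m)"
      using crude_Poincare[of "\<lambda>i. u m i - 1"] by (simp add: C_def dirichlet_minus_const)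
    also have "\<dots> \<le> C * (2 * dirichlet (u m))"
      using \<open>0 \<le> C\<close> dirichlet_nonneg by (intro mult_left_mono) auto
    finally show ?thesis .
  qed
  show ?thesis
    using \<beta>_square_less_1 \<open>0 \<le> C\<close> loss contraction domination
    by (intro telescoping_geometric_bound) simp_all
qed

subsection \<open>Mixing bound\<close>

lemma BL_pi_eq: "BL_pi (2*n) i = \<mu> i"
  by (simp add: BL_pi_def \<mu>_def)

lemma BL_T_eq:
  assumes "i \<le> n" "k \<le> n"
  shows "BL_T (2*n) i k =
    (if i = Suc k then p k else if k = Suc i then q k else if i = k then 1 - p k - q k else 0)"
proof -
  have "BL_p (2*n) l = p l" "BL_q (2*n) l = q l" for l
    using n_pos by (simp_all add: BL_p_def BL_q_def p_def q_def power2_eq_square field_simps)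
  then show ?thesis
    using assms by (simp add: BL_T_def)
qed

lemma sum_BL_T_column:
  assumes "k \<le> n"
  shows "(\<Sum>i\<le>n. BL_T (2*n) i k * f i) = K f k"
proof -
  have "BL_T (2*n) i k * f i = (if i = Suc k then p k * f (Suc k) else 0)
      + (if 0 < k \<and> i = k - 1 then q k * f (k - 1) else 0) + (if i = k then (1 - p k - q k) * f k else 0)"
    if "i \<le> n" for i
    using that assms by (auto simp: BL_T_eq)
  then have "(\<Sum>i\<le>n. BL_T (2*n) i k * f i) = (if Suc k \<le> n then p k * f (Suc k) else 0)
      + (if 0 < k then q k * f (k - 1) else 0) + (1 - p k - q k) * f k"
    using assms by (simp add: sum.distrib)
  also have "\<dots> = K f k"
  proof -
    have "(if Suc k \<le> n then p k * f (Suc k) else 0) = p k * f (Suc k)"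
    proof (cases "k < n")
      case False
      with assms have "k = n" by simp
      then show ?thesis by simp
    qed simp
    moreover have "(if 0 < k then q k * f (k - 1) else 0) = q k * f (k - 1)"
      by (cases k) simp_all
    ultimately show ?thesis
      by (simp add: K_def)
  qed
  finally show ?thesis .
qed

lemma BL_T_reversible:
  assumes "i \<le> n" "k \<le> n"
  shows "BL_T (2*n) i k * \<mu> k = BL_T (2*n) k i * \<mu> i"
proof -
  consider "i = Suc k" | "k = Suc i" | "i \<noteq> Suc k" "k \<noteq> Suc i"
    by blast
  then show ?thesis
  proof cases
    case 1
    then have "BL_T (2*n) i k = p k" "BL_T (2*n) k i = q i"
      using assms by (simp_all add: BL_T_eq)
    then show ?thesis
      using 1 assms detailed_balance[of k] by (simp add: mult.commute[of "\<mu> _"])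
  next
    case 2
    then have "BL_T (2*n) i k = q k" "BL_T (2*n) k i = p i"
      using assms by (simp_all add: BL_T_eq)
    then show ?thesis
      using 2 assms detailed_balance[of i] by (simp add: mult.commute[of "\<mu> _"])
  next
    case 3
    then show ?thesis
      using assms by (simp add: BL_T_eq)
  qed
qed

lemma sum_BL_T_column_eq_1: "k \<le> n \<Longrightarrow> (\<Sum>i\<le>n. BL_T (2*n) i k) = 1"
  using sum_BL_T_column[of k "\<lambda>_. 1"] by (simp add: K_def)

lemma BL_rho_sum:
  assumes "j \<le> n"
  shows "(\<Sum>i\<le>n. BL_rho (2*n) m j i) = 1"
proof (induction m)
  case 0
  with assms show ?case by simp
next
  case (Suc m)
  have "(\<Sum>i\<le>n. BL_rho (2*n) (Suc m) j i) = (\<Sum>i\<le>n. \<Sum>k\<le>n. BL_T (2*n) i k * BL_rho (2*n) m j k)"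
    by (simp add: atLeast0AtMost)
  also have "\<dots> = (\<Sum>k\<le>n. (\<Sum>i\<le>n. BL_T (2*n) i k) * BL_rho (2*n) m j k)"
    by (subst sum.swap) (simp add: sum_distrib_right)
  also have "\<dots> = (\<Sum>k\<le>n. BL_rho (2*n) m j k)"
    by (simp add: sum_BL_T_column_eq_1)
  finally show ?case
    using Suc by simp
qed

lemma BL_rho_density_step:
  assumes "i \<le> n"
  shows "BL_rho (2*n) (Suc m) j i / \<mu> i = K (\<lambda>k. BL_rho (2*n) m j k / \<mu> k) i"
proof -
  have "BL_rho (2*n) (Suc m) j i / \<mu> i = (\<Sum>k\<le>n. BL_T (2*n) i k * BL_rho (2*n) m j k / \<mu> i)"
    by (simp add: atLeast0AtMost sum_divide_distrib)
  also have "\<dots> = (\<Sum>k\<le>n. BL_T (2*n) k i * (BL_rho (2*n) m j k / \<mu> k))"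
  proof (intro sum.cong refl)
    fix k assume "k \<in> {..n}"
    then have "k \<le> n" by simp
    have "BL_T (2*n) i k = BL_T (2*n) k i * \<mu> i / \<mu> k"
      using BL_T_reversible[OF assms \<open>k \<le> n\<close>] \<mu>_pos[OF \<open>k \<le> n\<close>] by (simp add: field_simps)
    then show "BL_T (2*n) i k * BL_rho (2*n) m j k / \<mu> i = BL_T (2*n) k i * (BL_rho (2*n) m j k / \<mu> k)"
      using \<mu>_pos[OF assms] by simp
  qed
  also have "\<dots> = K (\<lambda>k. BL_rho (2*n) m j k / \<mu> k) i"
    by (rule sum_BL_T_column[OF assms])
  finally show ?thesis .
qed

lemma BL_tv_le:
  assumes "j \<le> n"
  shows "BL_tv (2*n) (BL_rho (2*n) m j) \<le> (1/2) * sqrt (8 / \<mu> j * (\<beta>^2)^m / (1 - \<beta>^2))"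
proof -
  define u where "u m i = BL_rho (2*n) m j i / \<mu> i" for m i
  have mean: "(\<Sum>i\<le>n. \<mu> i * u m i) = 1" for m
  proof -
    have "(\<Sum>i\<le>n. \<mu> i * u m i) = (\<Sum>i\<le>n. BL_rho (2*n) m j i)"
      by (intro sum.cong refl) (simp add: u_def \<mu>_nonzero)
    then show ?thesis
      using BL_rho_sum[OF assms] by simp
  qed
  have "dirichlet (u 0) \<le> 4 * sqnorm (u 0)"
    by (rule dirichlet_le_sqnorm)
  also have "sqnorm (u 0) = (\<Sum>i\<le>n. if i = j then 1 / \<mu> j else 0)"
    unfolding sqnorm_def using \<mu>_pos[OF assms] by (intro sum.cong refl) (simp add: u_def power2_eq_square)
  also have "\<dots> = 1 / \<mu> j"
    using assms by simp
  finally have "dirichlet (u 0) \<le> 4 / \<mu> j"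
    by simp
  have "sqnorm (\<lambda>i. u m i - 1) \<le> (\<beta>^2)^m * (2 * dirichlet (u 0)) / (1 - \<beta>^2)"
    using BL_rho_density_step mean unfolding u_def by (rule density_variance_decay)
  also have "\<dots> \<le> (\<beta>^2)^m * (2 * (4 / \<mu> j)) / (1 - \<beta>^2)"
    using \<open>dirichlet (u 0) \<le> 4 / \<mu> j\<close> \<beta>_square_less_1 by (intro divide_right_mono mult_left_mono) auto
  finally have variance: "sqnorm (\<lambda>i. u m i - 1) \<le> 8 / \<mu> j * (\<beta>^2)^m / (1 - \<beta>^2)"
    by (simp add: mult_ac)
  have "\<bar>BL_rho (2*n) m j i - BL_pi (2*n) i\<bar> = \<mu> i * \<bar>u m i - 1\<bar>" if "i \<le> n" for i
  proof -
    have "BL_rho (2*n) m j i - \<mu> i = \<mu> i * (u m i - 1)"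
      using \<mu>_pos[OF that] by (simp add: u_def field_simps)
    then show ?thesis
      using \<mu>_pos[OF that] by (simp add: BL_pi_eq abs_mult)
  qed
  then have "BL_tv (2*n) (BL_rho (2*n) m j) = (1/2) * (\<Sum>i\<le>n. \<mu> i * \<bar>u m i - 1\<bar>)"
    by (simp add: BL_tv_def atLeast0AtMost)
  also have "\<dots> \<le> (1/2) * sqrt (sqnorm (\<lambda>i. u m i - 1))"
    unfolding sqnorm_def using \<mu>_nonneg sum_\<mu> by (simp add: weighted_mean_abs_le_sqrt)
  also have "\<dots> \<le> (1/2) * sqrt (8 / \<mu> j * (\<beta>^2)^m / (1 - \<beta>^2))"
    using variance by simp
  finally show ?thesis .
qed

text \<open>Averaging over \<open>j\<close> by Cauchy--Schwarz, the weights \<open>\<mu> j\<close> cancel the factor \<open>1 / \<mu> j\<close>.\<close>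

lemma mean_BL_tv_le:
  "(\<Sum>j\<le>n. \<mu> j * BL_tv (2*n) (BL_rho (2*n) m j))
     \<le> (1/2) * sqrt (8 * (real n + 1) * (\<beta>^2)^m / (1 - \<beta>^2))"
proof -
  define Y where "Y j = 8 / \<mu> j * (\<beta>^2)^m / (1 - \<beta>^2)" for j
  have "0 \<le> Y j" for j
    using \<beta>_square_less_1 \<mu>_nonneg[of j] by (simp add: Y_def)
  have "(\<Sum>j\<le>n. \<mu> j * BL_tv (2*n) (BL_rho (2*n) m j)) \<le> (\<Sum>j\<le>n. \<mu> j * ((1/2) * sqrt (Y j)))"
    using BL_tv_le \<mu>_nonneg unfolding Y_def by (intro sum_mono mult_left_mono) auto
  also have "\<dots> = (1/2) * (\<Sum>j\<le>n. \<mu> j * \<bar>sqrt (Y j)\<bar>)"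
    unfolding sum_distrib_left by (intro sum.cong refl) (simp add: \<open>\<And>j. 0 \<le> Y j\<close>)
  also have "\<dots> \<le> (1/2) * sqrt (\<Sum>j\<le>n. \<mu> j * (sqrt (Y j))^2)"
    using \<mu>_nonneg sum_\<mu> by (simp add: weighted_mean_abs_le_sqrt)
  also have "(\<Sum>j\<le>n. \<mu> j * (sqrt (Y j))^2) = 8 * (real n + 1) * (\<beta>^2)^m / (1 - \<beta>^2)"
    using \<open>\<And>j. 0 \<le> Y j\<close> by (simp add: Y_def \<mu>_nonzero)
  finally show ?thesis .
qed

lemma \<beta>_square_pow_le: "(\<beta>^2)^m \<le> exp (- (4 * real m / real n))"
proof -
  have "(\<beta>^2)^m \<le> (exp (-2 / real n)^2)^m"
    using exp_ge_add_one_self[of "-2 / real n"] \<beta>_nonneg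
    by (intro power_mono) (simp_all add: \<beta>_def)
  also have "\<dots> = exp (-4 / real n) ^ m"
    by (simp add: power2_eq_square exp_add[symmetric])
  also have "\<dots> = exp (real m * (-4 / real n))"
    by (rule exp_of_nat_mult[symmetric])
  finally show ?thesis
    by (simp add: mult.commute)
qed

lemma exp_ln_two_minus: "exp (ln 2 - 2 * ln (2 * real n) - 4 * c) = 2 * exp (-4*c) / (2 * real n)^2"
proof -
  have "exp (2 * ln (2 * real n)) = (2 * real n)^2"
    using n_pos by (simp only: mult_2 exp_add power2_eq_square) simp
  then have "exp (ln 2 - 2 * ln (2 * real n) - 4 * c) = 2 / (2 * real n)^2 / exp (4 * c)"
    by (simp only: exp_diff) simp
  then show ?thesis
    by (simp add: exp_minus field_simps)
qed

lemma mixing_bound_le_exp: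
  assumes m: "real m \<ge> (1/4) * real (2*n) * ln (real (2*n)) + (c/2 - ln 2 / 8) * real (2*n)"
  shows "(1/2) * sqrt (8 * (real n + 1) * (\<beta>^2)^m / (1 - \<beta>^2)) \<le> exp (-2*c)"
proof -
  have gap: "2 / real n \<le> 1 - \<beta>^2"
    using \<beta>_nonneg \<beta>_less_1 mult_left_le[of \<beta> \<beta>] by (simp add: \<beta>_def power2_eq_square)
  have "real n * (2 * ln (2 * real n) + 4 * c - ln 2) \<le> 4 * real m"
    using m by (simp add: algebra_simps)
  then have "- (4 * real m / real n) \<le> ln 2 - 2 * ln (2 * real n) - 4 * c"
    using n_pos by (simp add: field_simps)
  then have pow: "(\<beta>^2)^m \<le> 2 * exp (-4*c) / (2 * real n)^2"
    using \<beta>_square_pow_le[of m] exp_ln_two_minus[of c] by (metis exp_le_cancel_iff order_trans)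
  have "8 * (real n + 1) * (\<beta>^2)^m / (1 - \<beta>^2) \<le> 8 * (real n + 1) * (\<beta>^2)^m / (2 / real n)"
    using gap n_pos \<beta>_square_less_1 by (intro divide_left_mono mult_pos_pos) auto
  also have "\<dots> = 4 * real n * (real n + 1) * (\<beta>^2)^m"
    using n_pos by (simp add: field_simps)
  also have "\<dots> \<le> 4 * real n * (real n + 1) * (2 * exp (-4*c) / (2 * real n)^2)"
    using pow n_pos by (intro mult_left_mono) auto
  also have "\<dots> = 2 * ((real n + 1) / real n) * exp (-4*c)"
    using n_pos by (simp add: field_simps power2_eq_square)
  also have "\<dots> \<le> 2 * 2 * exp (-4*c)"
    using n_pos by (intro mult_right_mono mult_left_mono) (simp_all add: field_simps)
  also have "\<dots> = (2 * exp (-2*c))^2"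
    by (simp add: power2_eq_square exp_add[symmetric])
  finally show ?thesis
    by (simp add: real_sqrt_le_iff real_le_lsqrt)
qed

end

theorem theorem5p1:
  "\<exists>A::real. A > 0 \<and>
     (\<forall>(N::nat) (c::real) (m::nat).
        even N \<longrightarrow> N \<ge> 6 \<longrightarrow> c > 0 \<longrightarrow>
        real m \<ge> (1/4) * real N * ln (real N) + (c/2 - ln 2 / 8) * real N \<longrightarrow>
        (\<Sum>j\<in>{0..N div 2}. BL_pi N j * BL_tv N (BL_rho N m j)) \<le> A * exp (-2*c))"
proof (intro exI[of _ 1] conjI allI impI)
  fix N :: nat and c :: real and m :: nat
  assume "even N" "N \<ge> 6" "c > 0"
    and m: "real m \<ge> (1/4) * real N * ln (real N) + (c/2 - ln 2 / 8) * real N"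
  define n where "n = N div 2"
  have N: "N = 2 * n"
    using \<open>even N\<close> by (simp add: n_def)
  interpret balanced_Bernoulli_Laplace n
    using \<open>N \<ge> 6\<close> by unfold_locales (simp add: n_def)
  have "(\<Sum>j\<in>{0..N div 2}. BL_pi N j * BL_tv N (BL_rho N m j))
      = (\<Sum>j\<le>n. \<mu> j * BL_tv (2*n) (BL_rho (2*n) m j))"
    by (simp add: N atLeast0AtMost BL_pi_eq)
  also have "\<dots> \<le> (1/2) * sqrt (8 * (real n + 1) * (\<beta>^2)^m / (1 - \<beta>^2))"
    by (rule mean_BL_tv_le)
  also have "\<dots> \<le> exp (-2*c)"
    using m by (intro mixing_bound_le_exp) (simp add: N)
  finally show "(\<Sum>j\<in>{0..N div 2}. BL_pi N j * BL_tv N (BL_rho N m j)) \<le> 1 * exp (-2*c)"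
    by simp
qed simp

end
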